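(* Let $\odot$ be a non-degenerate pseudo-multiplication and let $\tau$ be a $\sigma$-maxitive measure on a $\sigma$-algebra $\mathcal{B}$ on a nonempty set $E$ having the Radon–Nikodym property with respect to the idempotent $\odot$-integral. Then $\tau$ is semi-$\odot$-finite, i.e. for every $B\in\mathcal{B}$, $$\tau(B)=\sup\{\tau(A):A\in\mathcal{B},\ A\subset B,\ \tau(A)\text{ is }\odot\text{-finite}\}.$$
   Context: Write $\overline{\mathbb{R}}_+=[0,\infty]$. A pseudo-multiplication is a binary operation $\odot$ on $\overline{\mathbb{R}}_+$ with the following properties: - it is associative; - it is continuous on $(0,\infty)\times[0,\infty]$; - for every $t$, the map $s\mapsto s\odot t$ is continuous on $(0,\infty]$; - it is nondecreasing in each argument; - it has a left identity $1_\odot$, i.e. $1_\odot\odot t=t$ for all $t$; - it has no zero divisors, i.e. $s\odot t=0$ implies $s=0$ or $t=0$; - $0\odot t=t\odot 0=0$ for all $t$. Put $O(t)=\inf_{s>0}s\odot t$. An element $t$ is $\odot$-finite if $O(t)=0$, and $\odot$-infinite otherwise. The operation $\odot$ is non-degenerate if $1_\odot$ is $\odot$-finite. A $\sigma$-maxitive measure on $\mathcal{B}$ is a map $\nu:\mathcal{B}\to\overline{\mathbb{R}}_+$ with $\nu(\emptyset)=0$ and $\nu(\bigcup_j B_j)=\sup_j\nu(B_j)$ for every countable family. A map $f:E\to\overline{\mathbb{R}}_+$ is $\mathcal{B}$-measurable if $\{f>t\}\in\mathcal{B}$ for all $t\in[0,\infty)$. The idempotent $\odot$-integral is $\int^\infty_B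 f\odot d\tau=\sup_{t\in[0,\infty)}t\odot\tau(B\cap\{f>t\})$. $\nu\ll_\odot\tau$ means $\nu(B)\le\infty\odot\tau(B)$ for every $B\in\mathcal{B}$ with $\tau(B)$ $\odot$-finite. $\tau$ has the Radon–Nikodym property if every $\sigma$-maxitive $\nu\ll_\odot\tau$ admits a $\mathcal{B}$-measurable $c:E\to\overline{\mathbb{R}}_+$ with $\nu(B)=\int^\infty_B c\odot d\tau$ for all $B\in\mathcal{B}$. *)

theory Defs
  imports "HOL-Analysis.Analysis"
begin

definition pseudo_mult :: "(ennreal \<Rightarrow> ennreal \<Rightarrow> ennreal) \<Rightarrow> bool" where
  "pseudo_mult m \<longleftrightarrow>
     (\<forall>a b c. m (m a b) c = m a (m b c)) \<and>
     continuous_on ({0<..<\<infinity>} \<times> UNIV) (\<lambda>p. m (fst p) (snd p)) \<and>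
     (\<forall>t. continuous_on {0<..} (\<lambda>s. m s t)) \<and>
     (\<forall>a b c d. a \<le> b \<and> c \<le> d \<longrightarrow> m a c \<le> m b d) \<and>
     (\<exists>e. \<forall>t. m e t = t) \<and>
     (\<forall>s t. m s t = 0 \<longrightarrow> s = 0 \<or> t = 0) \<and>
     (\<forall>t. m 0 t = 0 \<and> m t 0 = 0)"

definition pm_O :: "(ennreal \<Rightarrow> ennreal \<Rightarrow> ennreal) \<Rightarrow> ennreal \<Rightarrow> ennreal" where
  "pm_O m t = (INF s\<in>{0<..}. m s t)"

definition pm_finite :: "(ennreal \<Rightarrow> ennreal \<Rightarrow> ennreal) \<Rightarrow> ennreal \<Rightarrow> bool" where
  "pm_finite m t \<longleftrightarrow> pm_O m t = 0"

text \<open>Non-degenerate: the left identity is finite (existential reading).\<close>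
definition pm_nondegenerate :: "(ennreal \<Rightarrow> ennreal \<Rightarrow> ennreal) \<Rightarrow> bool" where
  "pm_nondegenerate m \<longleftrightarrow> (\<exists>e. (\<forall>t. m e t = t) \<and> pm_finite m e)"

definition sigma_maxitive :: "'a set set \<Rightarrow> ('a set \<Rightarrow> ennreal) \<Rightarrow> bool" where
  "sigma_maxitive B \<nu> \<longleftrightarrow> \<nu> {} = 0 \<and>
     (\<forall>F::nat \<Rightarrow> 'a set. range F \<subseteq> B \<longrightarrow> \<nu> (\<Union>j. F j) = (SUP j. \<nu> (F j)))"

definition B_measurable :: "'a set \<Rightarrow> 'a set set \<Rightarrow> ('a \<Rightarrow> ennreal) \<Rightarrow> bool" where
  "B_measurable E B f \<longleftrightarrow> (\<forall>t::ennreal. t < \<infinity> \<longrightarrow> {x\<in>E. f x > t} \<in> B)"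

definition idem_integral ::
  "(ennreal \<Rightarrow> ennreal \<Rightarrow> ennreal) \<Rightarrow> 'a set \<Rightarrow> ('a set \<Rightarrow> ennreal) \<Rightarrow> 'a set \<Rightarrow> ('a \<Rightarrow> ennreal) \<Rightarrow> ennreal" where
  "idem_integral m E \<tau> A f = (SUP t\<in>{t::ennreal. t < \<infinity>}. m t (\<tau> (A \<inter> {x\<in>E. f x > t})))"

definition pm_abs_cont ::
  "(ennreal \<Rightarrow> ennreal \<Rightarrow> ennreal) \<Rightarrow> 'a set set \<Rightarrow> ('a set \<Rightarrow> ennreal) \<Rightarrow> ('a set \<Rightarrow> ennreal) \<Rightarrow> bool" where
  "pm_abs_cont m B \<nu> \<tau> \<longleftrightarrow> (\<forall>A\<in>B. pm_finite m (\<tau> A) \<longrightarrow> \<nu> A \<le> m \<infinity> (\<tau> A))"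

definition radon_nikodym_prop ::
  "(ennreal \<Rightarrow> ennreal \<Rightarrow> ennreal) \<Rightarrow> 'a set \<Rightarrow> 'a set set \<Rightarrow> ('a set \<Rightarrow> ennreal) \<Rightarrow> bool" where
  "radon_nikodym_prop m E B \<tau> \<longleftrightarrow>
     (\<forall>\<nu>. sigma_maxitive B \<nu> \<and> pm_abs_cont m B \<nu> \<tau> \<longrightarrow>
        (\<exists>c. B_measurable E B c \<and> (\<forall>A\<in>B. \<nu> A = idem_integral m E \<tau> A c)))"

definition semi_pm_finite ::
  "(ennreal \<Rightarrow> ennreal \<Rightarrow> ennreal) \<Rightarrow> 'a set set \<Rightarrow> ('a set \<Rightarrow> ennreal) \<Rightarrow> bool" where
  "semi_pm_finite m B \<tau> \<longleftrightarrow>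
     (\<forall>A\<in>B. \<tau> A = (SUP C\<in>{C\<in>B. C \<subseteq> A \<and> pm_finite m (\<tau> C)}. \<tau> C))"

end

theory Submission
  imports Defs
begin

text \<open>Apply the Radon--Nikodym property to \<open>\<nu> = min \<tau> e\<close>, where \<open>e\<close> is a finite left identity;
\<open>\<nu> \<le> \<tau> \<le> \<infinity> \<odot> \<tau>\<close>, so \<open>\<nu>\<close> has a density \<open>c\<close>. Every \<open>A \<in> \<B>\<close> is the countable union of
\<open>A \<inter> {c = 0}\<close>, which is \<open>\<tau>\<close>-null because \<open>\<nu>\<close> vanishes there and \<open>e \<noteq> 0\<close>, and of the sets
\<open>A \<inter> {c > 1/(n+1)}\<close>, whose measure \<open>t\<close> satisfies \<open>1/(n+1) \<odot> t \<le> \<nu> \<le> e\<close> and is therefore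
\<open>\<odot>\<close>-finite. Maxitivity then gives \<open>\<tau>(A)\<close> as the supremum over these pieces.\<close>

lemma ennreal_ex_inverse_Suc_less:
  assumes "0 < (y::ennreal)"
  shows "\<exists>n. ennreal (1 / real (Suc n)) < y"
proof (cases y)
  case (real r)
  with assms have "r > 0" by (simp add: ennreal_less_iff)
  then obtain n where "inverse (real (Suc n)) < r"
    using reals_Archimedean by blast
  with real \<open>r > 0\<close> show ?thesis
    by (metis ennreal_lessI inverse_eq_divide)
qed auto

context
  fixes m :: "ennreal \<Rightarrow> ennreal \<Rightarrow> ennreal"
  assumes m: "pseudo_mult m"
begin

lemma pseudo_mult_assoc: "m (m a b) c = m a (m b c)"
  using m by (simp add: pseudo_mult_def)

lemma pseudo_mult_mono: "a \<le> b \<Longrightarrow> c \<le> d \<Longrightarrow> m a c \<le> m b d"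
  using m by (simp add: pseudo_mult_def)

lemma pseudo_mult_eq_0_iff: "m s t = 0 \<longleftrightarrow> s = 0 \<or> t = 0"
  using m unfolding pseudo_mult_def by auto

lemma pseudo_mult_zero_right: "m t 0 = 0"
  using m by (simp add: pseudo_mult_def)

lemma pseudo_mult_left_identity: "\<exists>e. \<forall>t. m e t = t"
  using m by (simp add: pseudo_mult_def)

lemma pseudo_mult_le_infinity: "t \<le> m \<infinity> t"
proof -
  obtain e where "\<And>t. m e t = t"
    using pseudo_mult_left_identity by blast
  then show ?thesis
    using pseudo_mult_mono[of e \<infinity> t t] by simp
qed

lemma pm_finite_0: "pm_finite m 0"
proof -
  have "pm_O m 0 \<le> m 1 0"
    unfolding pm_O_def by (rule INF_lower) simp
  then show ?thesis
    unfolding pm_finite_def by (simp add: pseudo_mult_zero_right)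
qed

text \<open>The key estimate: \<open>O(t) \<le> (r \<odot> s) \<odot> t = r \<odot> (s \<odot> t) \<le> r \<odot> u\<close> for every \<open>r > 0\<close>,
  since \<open>r \<odot> s > 0\<close> by the absence of zero divisors.\<close>
lemma pm_finite_if_mult_le:
  assumes "0 < s" and "m s t \<le> u" and "pm_finite m u"
  shows "pm_finite m t"
proof -
  have "pm_O m t \<le> pm_O m u"
    unfolding pm_O_def
  proof (rule INF_mono)
    fix r :: ennreal assume "r \<in> {0<..}"
    with assms(1) have "m r s \<in> {0<..}"
      by (simp add: pseudo_mult_eq_0_iff zero_less_iff_neq_zero)
    moreover have "m (m r s) t \<le> m r u"
      using assms(2) by (simp add: pseudo_mult_assoc pseudo_mult_mono)
    ultimately show "\<exists>r'\<in>{0<..}. m r' t \<le> m r u" by blast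
  qed
  with assms(3) show ?thesis
    unfolding pm_finite_def by simp
qed

end

lemma sigma_maxitive_UN:
  fixes F :: "nat \<Rightarrow> 'a set"
  assumes "sigma_maxitive B \<tau>" and "range F \<subseteq> B"
  shows "\<tau> (\<Union>j. F j) = (SUP j. \<tau> (F j))"
  using assms unfolding sigma_maxitive_def by blast

lemma sigma_maxitive_mono:
  assumes "sigma_maxitive B \<tau>" and "A \<in> B" and "C \<in> B" and "A \<subseteq> C"
  shows "\<tau> A \<le> \<tau> C"
proof -
  let ?F = "case_nat A (\<lambda>_. C)"
  have "range ?F \<subseteq> B" and "(\<Union>j. ?F j) = C"
    using assms(2-4) by (auto split: nat.splits)
  then have "\<tau> C = (SUP j. \<tau> (?F j))"
    using sigma_maxitive_UN[OF assms(1)] by metis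
  also have "\<tau> A \<le> \<dots>"
    by (rule SUP_upper2[of 0]) auto
  finally show ?thesis .
qed

lemma sigma_maxitive_min_const:
  assumes "sigma_maxitive B \<tau>"
  shows "sigma_maxitive B (\<lambda>A. min (\<tau> A) e)"
  using assms unfolding sigma_maxitive_def
  by (simp add: inf_min[symmetric] SUP_inf inf.absorb1)

lemma semi_pm_finite_if_countable_cover:
  assumes "sigma_maxitive B \<tau>"
    and cover: "\<And>A. A \<in> B \<Longrightarrow>
      \<exists>F::nat \<Rightarrow> 'a set. range F \<subseteq> B \<and> (\<Union>j. F j) = A \<and> (\<forall>j. pm_finite m (\<tau> (F j)))"
  shows "semi_pm_finite m B \<tau>"
  unfolding semi_pm_finite_def
proof
  fix A assume A: "A \<in> B"
  let ?S = "{C \<in> B. C \<subseteq> A \<and> pm_finite m (\<tau> C)}"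
  show "\<tau> A = (SUP C\<in>?S. \<tau> C)"
  proof (rule antisym)
    obtain F :: "nat \<Rightarrow> 'a set" where F: "range F \<subseteq> B" "(\<Union>j. F j) = A" "\<And>j. pm_finite m (\<tau> (F j))"
      using cover[OF A] by blast
    have "\<tau> A = (SUP j. \<tau> (F j))"
      using sigma_maxitive_UN[OF assms(1) F(1)] F(2) by simp
    also have "\<dots> \<le> (SUP C\<in>?S. \<tau> C)"
    proof (rule SUP_least)
      fix j
      have "F j \<subseteq> A"
        using F(2) by blast
      moreover have "F j \<in> B"
        using F(1) by blast
      ultimately have "F j \<in> ?S"
        using F(3) by simp
      then show "\<tau> (F j) \<le> (SUP C\<in>?S. \<tau> C)"
        by (rule SUP_upper)
    qed
    finally show "\<tau> A \<le> (SUP C\<in>?S. \<tau> C)" .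
    show "(SUP C\<in>?S. \<tau> C) \<le> \<tau> A"
      by (rule SUP_least) (simp add: sigma_maxitive_mono[OF assms(1) _ A])
  qed
qed

lemma idem_integral_lower:
  assumes "t < \<infinity>" and "A \<subseteq> {x\<in>E. c x > t}"
  shows "m t (\<tau> A) \<le> idem_integral m E \<tau> A c"
proof -
  have "A \<inter> {x\<in>E. c x > t} = A"
    using assms(2) by blast
  then show ?thesis
    unfolding idem_integral_def using assms(1)
    by (metis (mono_tags, lifting) SUP_upper mem_Collect_eq)
qed

lemma idem_integral_eq_0:
  assumes "pseudo_mult m" and "\<tau> {} = 0" and "\<And>x. x \<in> A \<Longrightarrow> x \<in> E \<Longrightarrow> c x = 0"
  shows "idem_integral m E \<tau> A c = 0"
proof -
  have "A \<inter> {x\<in>E. c x > t} = {}" for t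
    using assms(3) by (auto simp: not_less_zero)
  then show ?thesis
    unfolding idem_integral_def using assms(2)
    by (simp add: pseudo_mult_zero_right[OF assms(1)] SUP_constant bot_ennreal)
qed

lemma level_set_cover:
  fixes c :: "'a \<Rightarrow> ennreal"
  assumes "A \<subseteq> E"
  shows "(\<Union>j. case_nat (A - {x\<in>E. c x > 0})
                (\<lambda>n. A \<inter> {x\<in>E. c x > ennreal (1 / real (Suc n))}) j) = A"
  (is "(\<Union>j. ?F j) = A")
proof
  show "(\<Union>j. ?F j) \<subseteq> A"
    by (auto split: nat.splits)
  show "A \<subseteq> (\<Union>j. ?F j)"
  proof
    fix x assume x: "x \<in> A"
    show "x \<in> (\<Union>j. ?F j)"
    proof (cases "c x > 0")
      case False
      with x have "x \<in> ?F 0" by simp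
      then show ?thesis by blast
    next
      case True
      then obtain n where "ennreal (1 / real (Suc n)) < c x"
        using ennreal_ex_inverse_Suc_less by blast
      with x assms have "x \<in> ?F (Suc n)" by auto
      then show ?thesis by blast
    qed
  qed
qed

context
  fixes m :: "ennreal \<Rightarrow> ennreal \<Rightarrow> ennreal" and e :: ennreal
    and E :: "'a set" and B :: "'a set set" and \<tau> :: "'a set \<Rightarrow> ennreal" and c :: "'a \<Rightarrow> ennreal"
  assumes m: "pseudo_mult m"
    and e: "\<And>t. m e t = t" "pm_finite m e"
    and \<tau>: "sigma_maxitive B \<tau>"
    and density: "\<And>A. A \<in> B \<Longrightarrow> min (\<tau> A) e = idem_integral m E \<tau> A c"
begin

lemma density_null_set:
  assumes "A \<in> B" and "\<And>x. x \<in> A \<Longrightarrow> x \<in> E \<Longrightarrow> c x = 0"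
  shows "\<tau> A = 0"
proof -
  have "e \<noteq> 0"
    by (metis e(1) pseudo_mult_eq_0_iff[OF m] zero_neq_one)
  moreover have "idem_integral m E \<tau> A c = 0"
    using \<tau> assms(2) by (intro idem_integral_eq_0[OF m]) (simp_all add: sigma_maxitive_def)
  then have "min (\<tau> A) e = 0"
    using density[OF assms(1)] by simp
  ultimately show ?thesis
    by (simp add: min_def split: if_splits)
qed

lemma density_pm_finite:
  assumes "A \<in> B" and "0 < s" and "s < \<infinity>" and "A \<subseteq> {x\<in>E. c x > s}"
  shows "pm_finite m (\<tau> A)"
proof (rule pm_finite_if_mult_le[OF m \<open>0 < s\<close>])
  have "m s (\<tau> A) \<le> idem_integral m E \<tau> A c"
    using assms(3,4) by (rule idem_integral_lower)
  also have "\<dots> \<le> e"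
    using density[OF assms(1)] by (metis min.cobounded2)
  finally show "m s (\<tau> A) \<le> e" .
qed (use e in simp)

lemma density_countable_cover:
  assumes "sigma_algebra E B" and "B_measurable E B c" and A: "A \<in> B"
  shows "\<exists>F::nat \<Rightarrow> 'a set. range F \<subseteq> B \<and> (\<Union>j. F j) = A \<and> (\<forall>j. pm_finite m (\<tau> (F j)))"
proof -
  interpret sigma_algebra E B by fact
  have level_set: "{x\<in>E. c x > t} \<in> B" if "t < \<infinity>" for t
    using assms(2) that unfolding B_measurable_def by blast
  define F where "F = case_nat (A - {x\<in>E. c x > 0})
    (\<lambda>n. A \<inter> {x\<in>E. c x > ennreal (1 / real (Suc n))})"
  have "F j \<in> B \<and> pm_finite m (\<tau> (F j))" for j
  proof (cases j)
    case 0
    then have "F j \<in> B"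
      unfolding F_def using A level_set[of 0] by (simp add: Diff)
    moreover have "\<tau> (F j) = 0"
      using density_null_set[OF \<open>F j \<in> B\<close>] unfolding F_def 0 by simp
    ultimately show ?thesis
      by (simp add: pm_finite_0[OF m])
  next
    case (Suc n)
    then have "F j \<in> B"
      unfolding F_def using A level_set by (simp add: Int)
    then show ?thesis
      using density_pm_finite[of "F j" "ennreal (1 / real (Suc n))"]
      unfolding F_def Suc by auto
  qed
  then show ?thesis
    using level_set_cover[OF sets_into_space[OF A]] unfolding F_def by blast
qed

end

theorem mainTheorem9:
  fixes m :: "ennreal \<Rightarrow> ennreal \<Rightarrow> ennreal"
    and E :: "'a set" and B :: "'a set set" and \<tau> :: "'a set \<Rightarrow> ennreal"
  assumes "pseudo_mult m"
    and "pm_nondegenerate m"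
    and "E \<noteq> {}"
    and "sigma_algebra E B"
    and "sigma_maxitive B \<tau>"
    and "radon_nikodym_prop m E B \<tau>"
  shows "semi_pm_finite m B \<tau>"
proof -
  obtain e where e: "\<And>t. m e t = t" "pm_finite m e"
    using assms(2) unfolding pm_nondegenerate_def by blast
  have "pm_abs_cont m B (\<lambda>A. min (\<tau> A) e) \<tau>"
    unfolding pm_abs_cont_def
    by (meson min.coboundedI1 pseudo_mult_le_infinity[OF assms(1)])
  then obtain c where "B_measurable E B c"
    and density: "\<And>A. A \<in> B \<Longrightarrow> min (\<tau> A) e = idem_integral m E \<tau> A c"
    using assms(6) sigma_maxitive_min_const[OF assms(5)]
    unfolding radon_nikodym_prop_def by blast
  then show ?thesis
    using density_countable_cover[OF assms(1) e assms(5) density assms(4)]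
    by (intro semi_pm_finite_if_countable_cover[OF assms(5)])
qed

end
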